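(* Let $\beta$ be a complex number with $\beta\neq 0$ and $\beta\neq 1$, and let $Q_\beta$ be the unital associative complex algebra generated by $a_1^-,a_2^-,a_1^+,a_2^+$ subject to the relations $$a_i^-a_j^-=0,\qquad a_i^+a_j^+=0\qquad (i,j\in\{1,2\}),$$ $$a_1^-a_1^++a_2^-a_2^++\beta a_1^+a_1^-+\beta a_2^+a_2^-=1 .$$ Define $$N_1=\frac{\beta}{\beta-1}\left(a_1^-a_1^++\beta a_1^+a_1^-\right)+\beta a_2^+a_2^-,\qquad N_2=-\frac{\beta}{\beta-1}\left(a_1^-a_1^++a_1^+a_1^-\right).$$ Then for all $i,j\in\{1,2\}$, $$[N_i,a_j^\pm]=\pm\delta_{ij}\,a_j^\pm,$$ where $[x,y]=xy-yx$. Consequently $Q_\beta$ is a number operator algebra of type $2$ with number operators $N_1,N_2$; moreover it is quadratic, and symmetric (exchanging the indices $1$ and $2$ of the generators induces an automorphism of $Q_\beta$).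
   Context: A number operator algebra (NOA) of type $n$ is an algebra generated by $a_1^-,\dots,a_n^-,a_1^+,\dots,a_n^+$, equipped with an involution exchanging $a_i^-$ and $a_i^+$, together with $n$ elements $N_1,\dots,N_n$ of the algebra satisfying $[N_i,a_j^\pm]=\pm\delta_{ij}a_j^\pm$ for all $i,j$. A NOA is called quadratic if its defining relations between the generators have degree at most two, and symmetric if every permutation of the indices of the generators induces an automorphism of the algebra. On $Q_\beta$ the involution is the conjugate-linear anti-automorphism exchanging $a_i^-$ and $a_i^+$ (for real $\beta$ it preserves the defining relations). *)

theory Defs
  imports Complex_Main "HOL-Library.Poly_Mapping"
begin

datatype ix = i1 | i2
datatype gen = Minus ix | Plus ix

text \<open>Words in the generators form a (noncommutative) monoid under concatenation,
  written additively so that the convolution ring structure of Poly_Mapping applies.\<close>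
datatype word = W "gen list"

instantiation word :: monoid_add
begin
definition zero_word :: word where "zero_word = W []"
fun plus_word :: "word \<Rightarrow> word \<Rightarrow> word" where "plus_word (W u) (W v) = W (u @ v)"
instance
proof
  fix a b c :: word
  show "a + b + c = a + (b + c)" by (cases a; cases b; cases c) simp
  show "0 + a = a" by (cases a) (simp add: zero_word_def)
  show "a + 0 = a" by (cases a) (simp add: zero_word_def)
qed
end

text \<open>The free unital associative complex algebra on the four generators:
  finitely supported complex-valued functions on words, with convolution product.\<close>
type_synonym falg = "word \<Rightarrow>\<^sub>0 complex"

definition sc :: "complex \<Rightarrow> falg" where "sc c = Poly_Mapping.single 0 c"
definition am :: "ix \<Rightarrow> falg" where "am i = Poly_Mapping.single (W [Minus i]) 1"
definition ap :: "ix \<Rightarrow> falg" where "ap i = Poly_Mapping.single (W [Plus i]) 1"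

inductive_set two_sided_ideal :: "falg set \<Rightarrow> falg set" for R where
  zero: "0 \<in> two_sided_ideal R"
| gen: "r \<in> R \<Longrightarrow> x * r * y \<in> two_sided_ideal R"
| add: "a \<in> two_sided_ideal R \<Longrightarrow> b \<in> two_sided_ideal R \<Longrightarrow> a + b \<in> two_sided_ideal R"

text \<open>Defining relations of Q_beta (each element r stands for the relation r = 0).\<close>
definition rels :: "complex \<Rightarrow> falg set" where
  "rels \<beta> = {am i * am j | i j. True} \<union> {ap i * ap j | i j. True}
     \<union> {am i1 * ap i1 + am i2 * ap i2 + sc \<beta> * ap i1 * am i1 + sc \<beta> * ap i2 * am i2 - 1}"

definition eqQ :: "complex \<Rightarrow> falg \<Rightarrow> falg \<Rightarrow> bool" where
  "eqQ \<beta> x y \<longleftrightarrow> x - y \<in> two_sided_ideal (rels \<beta>)"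

definition commut :: "falg \<Rightarrow> falg \<Rightarrow> falg" where "commut x y = x * y - y * x"

definition Nop :: "complex \<Rightarrow> ix \<Rightarrow> falg" where
  "Nop \<beta> i = (if i = i1
     then sc (\<beta> / (\<beta> - 1)) * (am i1 * ap i1 + sc \<beta> * ap i1 * am i1) + sc \<beta> * ap i2 * am i2
     else - (sc (\<beta> / (\<beta> - 1)) * (am i1 * ap i1 + ap i1 * am i1)))"

fun swap_ix :: "ix \<Rightarrow> ix" where "swap_ix i1 = i2" | "swap_ix i2 = i1"
fun swap_gen :: "gen \<Rightarrow> gen" where
  "swap_gen (Minus i) = Minus (swap_ix i)" | "swap_gen (Plus i) = Plus (swap_ix i)"
fun swap_word :: "word \<Rightarrow> word" where "swap_word (W u) = W (map swap_gen u)"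
definition fswap :: "falg \<Rightarrow> falg" where
  "fswap p = (\<Sum>u\<in>Poly_Mapping.keys p. Poly_Mapping.single (swap_word u) (Poly_Mapping.lookup p u))"

end

theory Submission
  imports Defs
begin

(* Write c = beta/(beta-1) and S_i = a_i^- a_i^+ + a_i^+ a_i^-. Then N_2 = -c S_1, and the unit
   relation gives N_1 = c - c S_2 modulo the relations. Since a_i^- a_j^- = a_i^+ a_j^+ = 0, S_i
   commutes with a_i^-+; for i ~= j, multiplying the unit relation by a_j^-+ from the left and from
   the right shows [S_i, a_j^-+] = -+(1 - 1/beta) a_j^-+. As c (1 - 1/beta) = 1, this yields
   [N_i, a_j^-+] = -+delta_ij a_j^-+. The index swap is an automorphism of the free algebra that
   permutes the defining relations, so it preserves the ideal they generate. *)

lemma two_sided_ideal_mult_left: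
  "a \<in> two_sided_ideal R \<Longrightarrow> x * a \<in> two_sided_ideal R"
proof (induction rule: two_sided_ideal.induct)
  case (gen r y z)
  show ?case using two_sided_ideal.gen[OF gen, of "x * y" z] by (simp add: mult.assoc)
qed (auto simp: distrib_left intro: two_sided_ideal.intros)

lemma two_sided_ideal_mult_right:
  "a \<in> two_sided_ideal R \<Longrightarrow> a * x \<in> two_sided_ideal R"
proof (induction rule: two_sided_ideal.induct)
  case (gen r y z)
  show ?case using two_sided_ideal.gen[OF gen, of y "z * x"] by (simp add: mult.assoc)
qed (auto simp: distrib_right intro: two_sided_ideal.intros)

lemma two_sided_ideal_uminus:
  "a \<in> two_sided_ideal R \<Longrightarrow> - a \<in> two_sided_ideal R"
  using two_sided_ideal_mult_left[of a R "- 1"] by simp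

lemma two_sided_ideal_diff:
  "a \<in> two_sided_ideal R \<Longrightarrow> b \<in> two_sided_ideal R \<Longrightarrow> a - b \<in> two_sided_ideal R"
  using two_sided_ideal.add[OF _ two_sided_ideal_uminus] by simp

lemma poly_mapping_update_eq_add_single:
  "a \<notin> Poly_Mapping.keys f \<Longrightarrow> Poly_Mapping.update a b f = f + Poly_Mapping.single a b"
  by (rule poly_mapping_eqI)
    (auto simp: lookup_update lookup_add Poly_Mapping.lookup_single when_def in_keys_iff)

lemma sc_mult_commute: "sc a * x = x * sc a"
proof (induction x rule: update_induct)
  case (update f k b)
  then show ?case
    by (simp add: poly_mapping_update_eq_add_single distrib_left distrib_right sc_def mult_single mult.commute)
qed simp

lemma sc_mult_left_commute: "x * (sc a * y) = sc a * (x * y)"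
  by (metis mult.assoc sc_mult_commute)

lemma sc_mult_sc [simp]: "sc a * sc b = sc (a * b)"
  by (simp add: sc_def mult_single)

lemma sc_mult_sc_assoc [simp]: "sc a * (sc b * x) = sc (a * b) * x"
  by (simp add: mult.assoc[symmetric])

lemma sc_0 [simp]: "sc 0 = 0"
  by (simp add: sc_def)

lemma sc_1 [simp]: "sc 1 = 1"
  by (simp add: sc_def)

lemma sc_add: "sc (a + b) = sc a + sc b"
  by (simp add: sc_def single_add)

lemma sc_diff: "sc (a - b) = sc a - sc b"
  by (simp add: sc_def single_diff)

lemma commut_sc_left [simp]: "commut (sc a) x = 0"
  by (simp add: commut_def sc_mult_commute)

lemma commut_add_left: "commut (x + y) z = commut x z + commut y z"
  by (simp add: commut_def algebra_simps)

lemma commut_diff_left: "commut (x - y) z = commut x z - commut y z"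
  by (simp add: commut_def algebra_simps)

lemma commut_sc_mult_left: "commut (sc a * x) z = sc a * commut x z"
  by (simp add: commut_def algebra_simps sc_mult_left_commute)

lemma eqQ_refl [simp]: "eqQ \<beta> x x"
  by (simp add: eqQ_def two_sided_ideal.zero)

lemma eqQ_sym: "eqQ \<beta> x y \<Longrightarrow> eqQ \<beta> y x"
  unfolding eqQ_def using two_sided_ideal_uminus by fastforce

lemma eqQ_trans [trans]: "eqQ \<beta> x y \<Longrightarrow> eqQ \<beta> y z \<Longrightarrow> eqQ \<beta> x z"
  unfolding eqQ_def using two_sided_ideal.add by fastforce

lemma eqQ_add: "eqQ \<beta> x x' \<Longrightarrow> eqQ \<beta> y y' \<Longrightarrow> eqQ \<beta> (x + y) (x' + y')"
  unfolding eqQ_def using two_sided_ideal.add by (fastforce simp: algebra_simps)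

lemma eqQ_diff: "eqQ \<beta> x x' \<Longrightarrow> eqQ \<beta> y y' \<Longrightarrow> eqQ \<beta> (x - y) (x' - y')"
  unfolding eqQ_def using two_sided_ideal_diff by (fastforce simp: algebra_simps)

lemma eqQ_uminus: "eqQ \<beta> x x' \<Longrightarrow> eqQ \<beta> (- x) (- x')"
  unfolding eqQ_def using two_sided_ideal_uminus by (fastforce simp: algebra_simps)

lemma eqQ_mult: "eqQ \<beta> x x' \<Longrightarrow> eqQ \<beta> y y' \<Longrightarrow> eqQ \<beta> (x * y) (x' * y')"
proof -
  assume "eqQ \<beta> x x'" "eqQ \<beta> y y'"
  then have "(x - x') * y + x' * (y - y') \<in> two_sided_ideal (rels \<beta>)"
    unfolding eqQ_def
    by (intro two_sided_ideal.add two_sided_ideal_mult_left two_sided_ideal_mult_right)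
  then show ?thesis
    by (simp add: eqQ_def algebra_simps)
qed

lemma eqQ_commut: "eqQ \<beta> x x' \<Longrightarrow> eqQ \<beta> y y' \<Longrightarrow> eqQ \<beta> (commut x y) (commut x' y')"
  unfolding commut_def by (intro eqQ_diff eqQ_mult)

lemma eqQ_relator: "r \<in> rels \<beta> \<Longrightarrow> eqQ \<beta> r 0"
  using two_sided_ideal.gen[of r "rels \<beta>" 1 1] by (simp add: eqQ_def)

lemma eqQ_am_am: "eqQ \<beta> (am i * am j) 0"
  by (rule eqQ_relator) (auto simp: rels_def)

lemma eqQ_ap_ap: "eqQ \<beta> (ap i * ap j) 0"
  by (rule eqQ_relator) (auto simp: rels_def)

definition unit_sum :: "complex \<Rightarrow> falg" where
  "unit_sum \<beta> = am i1 * ap i1 + am i2 * ap i2 + sc \<beta> * ap i1 * am i1 + sc \<beta> * ap i2 * am i2"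

lemma eqQ_unit_sum: "eqQ \<beta> (unit_sum \<beta>) 1"
  using eqQ_relator[of "unit_sum \<beta> - 1" \<beta>] by (simp add: rels_def unit_sum_def eqQ_def)

lemma eqQ_commut_left_am: "eqQ \<beta> (commut (am i * x) (am j)) (am i * x * am j)"
proof -
  have "eqQ \<beta> (am i * x * am j - am j * am i * x) (am i * x * am j - 0 * x)"
    by (intro eqQ_diff eqQ_mult eqQ_am_am eqQ_refl)
  then show ?thesis by (simp add: commut_def mult.assoc)
qed

lemma eqQ_commut_right_am: "eqQ \<beta> (commut (x * am i) (am j)) (- (am j * x * am i))"
proof -
  have "eqQ \<beta> (x * (am i * am j) - am j * x * am i) (x * 0 - am j * x * am i)"
    by (intro eqQ_diff eqQ_mult eqQ_am_am eqQ_refl)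
  then show ?thesis by (simp add: commut_def mult.assoc)
qed

lemma eqQ_commut_left_ap: "eqQ \<beta> (commut (ap i * x) (ap j)) (ap i * x * ap j)"
proof -
  have "eqQ \<beta> (ap i * x * ap j - ap j * ap i * x) (ap i * x * ap j - 0 * x)"
    by (intro eqQ_diff eqQ_mult eqQ_ap_ap eqQ_refl)
  then show ?thesis by (simp add: commut_def mult.assoc)
qed

lemma eqQ_commut_right_ap: "eqQ \<beta> (commut (x * ap i) (ap j)) (- (ap j * x * ap i))"
proof -
  have "eqQ \<beta> (x * (ap i * ap j) - ap j * x * ap i) (x * 0 - ap j * x * ap i)"
    by (intro eqQ_diff eqQ_mult eqQ_ap_ap eqQ_refl)
  then show ?thesis by (simp add: commut_def mult.assoc)
qed

lemma eqQ_am_mult_unit_sum: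
  assumes "i \<noteq> j"
  shows "eqQ \<beta> (sc \<beta> * (am j * ap i * am i + am j * ap j * am j)) (am j)"
proof -
  have "am j = am j * 1" by simp
  also have "eqQ \<beta> \<dots> (am j * unit_sum \<beta>)"
    by (intro eqQ_mult eqQ_refl eqQ_sym[OF eqQ_unit_sum])
  also have "am j * unit_sum \<beta> = am j * am i * ap i + am j * am j * ap j
      + sc \<beta> * (am j * ap i * am i + am j * ap j * am j)"
    using assms by (cases i; cases j) (simp_all add: unit_sum_def algebra_simps sc_mult_left_commute)
  also have "eqQ \<beta> \<dots> (0 * ap i + 0 * ap j + sc \<beta> * (am j * ap i * am i + am j * ap j * am j))"
    by (intro eqQ_add eqQ_mult eqQ_am_am eqQ_refl)
  finally show ?thesis by (simp add: eqQ_sym)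
qed

lemma eqQ_unit_sum_mult_am:
  assumes "i \<noteq> j"
  shows "eqQ \<beta> (am i * ap i * am j + am j * ap j * am j) (am j)"
proof -
  have "am j = 1 * am j" by simp
  also have "eqQ \<beta> \<dots> (unit_sum \<beta> * am j)"
    by (intro eqQ_mult eqQ_refl eqQ_sym[OF eqQ_unit_sum])
  also have "unit_sum \<beta> * am j = am i * ap i * am j + am j * ap j * am j
      + sc \<beta> * (ap i * (am i * am j) + ap j * (am j * am j))"
    using assms by (cases i; cases j) (simp_all add: unit_sum_def algebra_simps)
  also have "eqQ \<beta> \<dots> (am i * ap i * am j + am j * ap j * am j + sc \<beta> * (ap i * 0 + ap j * 0))"
    by (intro eqQ_add eqQ_mult eqQ_am_am eqQ_refl)
  finally show ?thesis by (simp add: eqQ_sym)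
qed

lemma eqQ_ap_mult_unit_sum:
  assumes "i \<noteq> j"
  shows "eqQ \<beta> (ap j * am i * ap i + ap j * am j * ap j) (ap j)"
proof -
  have "ap j = ap j * 1" by simp
  also have "eqQ \<beta> \<dots> (ap j * unit_sum \<beta>)"
    by (intro eqQ_mult eqQ_refl eqQ_sym[OF eqQ_unit_sum])
  also have "ap j * unit_sum \<beta> = ap j * am i * ap i + ap j * am j * ap j
      + sc \<beta> * (ap j * ap i * am i + ap j * ap j * am j)"
    using assms by (cases i; cases j) (simp_all add: unit_sum_def algebra_simps sc_mult_left_commute)
  also have "eqQ \<beta> \<dots> (ap j * am i * ap i + ap j * am j * ap j + sc \<beta> * (0 * am i + 0 * am j))"
    by (intro eqQ_add eqQ_mult eqQ_ap_ap eqQ_refl)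
  finally show ?thesis by (simp add: eqQ_sym)
qed

lemma eqQ_unit_sum_mult_ap:
  assumes "i \<noteq> j"
  shows "eqQ \<beta> (sc \<beta> * (ap i * am i * ap j + ap j * am j * ap j)) (ap j)"
proof -
  have "ap j = 1 * ap j" by simp
  also have "eqQ \<beta> \<dots> (unit_sum \<beta> * ap j)"
    by (intro eqQ_mult eqQ_refl eqQ_sym[OF eqQ_unit_sum])
  also have "unit_sum \<beta> * ap j = am i * (ap i * ap j) + am j * (ap j * ap j)
      + sc \<beta> * (ap i * am i * ap j + ap j * am j * ap j)"
    using assms by (cases i; cases j) (simp_all add: unit_sum_def algebra_simps)
  also have "eqQ \<beta> \<dots> (am i * 0 + am j * 0 + sc \<beta> * (ap i * am i * ap j + ap j * am j * ap j))"
    by (intro eqQ_add eqQ_mult eqQ_ap_ap eqQ_refl)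
  finally show ?thesis by (simp add: eqQ_sym)
qed

definition anticommut :: "falg \<Rightarrow> falg \<Rightarrow> falg" where "anticommut x y = x * y + y * x"

lemma eqQ_commut_anticommut_am:
  assumes "\<beta> \<noteq> 0"
  shows "eqQ \<beta> (commut (anticommut (am i) (ap i)) (am j)) (if i = j then 0 else sc (1 - 1 / \<beta>) * am j)"
proof -
  have "commut (anticommut (am i) (ap i)) (am j) = commut (am i * ap i) (am j) + commut (ap i * am i) (am j)"
    by (simp add: anticommut_def commut_add_left)
  also have "eqQ \<beta> \<dots> (am i * ap i * am j + - (am j * ap i * am i))"
    by (intro eqQ_add eqQ_commut_left_am eqQ_commut_right_am)
  finally have commut_eq: "eqQ \<beta> (commut (anticommut (am i) (ap i)) (am j)) (am i * ap i * am j - am j * ap i * am i)"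
    by simp
  show ?thesis
  proof (cases "i = j")
    case True
    then show ?thesis using commut_eq by simp
  next
    case False
    note commut_eq
    also have "am i * ap i * am j - am j * ap i * am i = (am i * ap i * am j + am j * ap j * am j)
        - sc (1 / \<beta>) * (sc \<beta> * (am j * ap i * am i + am j * ap j * am j))"
      using assms by (simp add: algebra_simps)
    also have "eqQ \<beta> \<dots> (am j - sc (1 / \<beta>) * am j)"
      using False by (intro eqQ_diff eqQ_mult eqQ_refl eqQ_unit_sum_mult_am eqQ_am_mult_unit_sum)
    also have "am j - sc (1 / \<beta>) * am j = sc (1 - 1 / \<beta>) * am j"
      by (simp add: sc_diff algebra_simps)
    finally show ?thesis using False by simp
  qed
qed

lemma eqQ_commut_anticommut_ap:
  assumes "\<beta> \<noteq> 0"
  shows "eqQ \<beta> (commut (anticommut (am i) (ap i)) (ap j)) (if i = j then 0 else - (sc (1 - 1 / \<beta>) * ap j))"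
proof -
  have "commut (anticommut (am i) (ap i)) (ap j) = commut (am i * ap i) (ap j) + commut (ap i * am i) (ap j)"
    by (simp add: anticommut_def commut_add_left)
  also have "eqQ \<beta> \<dots> (- (ap j * am i * ap i) + ap i * am i * ap j)"
    by (intro eqQ_add eqQ_commut_left_ap eqQ_commut_right_ap)
  finally have commut_eq: "eqQ \<beta> (commut (anticommut (am i) (ap i)) (ap j)) (ap i * am i * ap j - ap j * am i * ap i)"
    by simp
  show ?thesis
  proof (cases "i = j")
    case True
    then show ?thesis using commut_eq by simp
  next
    case False
    note commut_eq
    also have "ap i * am i * ap j - ap j * am i * ap i = sc (1 / \<beta>) * (sc \<beta> * (ap i * am i * ap j + ap j * am j * ap j))
        - (ap j * am i * ap i + ap j * am j * ap j)"
      using assms by (simp add: algebra_simps)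
    also have "eqQ \<beta> \<dots> (sc (1 / \<beta>) * ap j - ap j)"
      using False by (intro eqQ_diff eqQ_mult eqQ_refl eqQ_unit_sum_mult_ap eqQ_ap_mult_unit_sum)
    also have "sc (1 / \<beta>) * ap j - ap j = - (sc (1 - 1 / \<beta>) * ap j)"
      by (simp add: sc_diff algebra_simps)
    finally show ?thesis using False by simp
  qed
qed

lemma eqQ_Nop_anticommut:
  assumes "\<beta> \<noteq> 1"
  shows "eqQ \<beta> (Nop \<beta> i) (sc (if i = i1 then \<beta> / (\<beta> - 1) else 0)
    - sc (\<beta> / (\<beta> - 1)) * anticommut (am (swap_ix i)) (ap (swap_ix i)))"
proof (cases i)
  case i1
  define c where "c = \<beta> / (\<beta> - 1)"
  have "\<beta> * c = c + \<beta>"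
    using assms by (simp add: c_def field_simps right_diff_distrib)
  then have sc_c_beta: "sc (\<beta> * c) = sc c + sc \<beta>"
    by (simp add: sc_add)
  have "Nop \<beta> i1 = sc c * (unit_sum \<beta> - (am i2 * ap i2 + sc \<beta> * (ap i2 * am i2))) + sc \<beta> * (ap i2 * am i2)"
    by (simp add: Nop_def unit_sum_def c_def[symmetric] algebra_simps)
  also have "eqQ \<beta> \<dots> (sc c * (1 - (am i2 * ap i2 + sc \<beta> * (ap i2 * am i2))) + sc \<beta> * (ap i2 * am i2))"
    by (intro eqQ_add eqQ_mult eqQ_diff eqQ_refl eqQ_unit_sum)
  also have "\<dots> = sc c - sc c * anticommut (am i2) (ap i2)"
    unfolding anticommut_def by (simp add: algebra_simps sc_c_beta)
  finally show ?thesis using i1 by (simp add: c_def)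
qed (simp add: Nop_def anticommut_def)

lemma eqQ_commut_Nop_am:
  assumes "\<beta> \<noteq> 0" "\<beta> \<noteq> 1"
  shows "eqQ \<beta> (commut (Nop \<beta> i) (am j)) (- (if i = j then am j else 0))"
proof -
  define c where "c = \<beta> / (\<beta> - 1)"
  define a where "a = (if i = i1 then c else 0)"
  have c_inverse: "c * (1 - 1 / \<beta>) = 1"
    using assms by (simp add: c_def field_simps)
  have "eqQ \<beta> (commut (Nop \<beta> i) (am j))
      (commut (sc a - sc c * anticommut (am (swap_ix i)) (ap (swap_ix i))) (am j))"
    unfolding a_def c_def by (intro eqQ_commut eqQ_refl eqQ_Nop_anticommut assms)
  also have "\<dots> = - (sc c * commut (anticommut (am (swap_ix i)) (ap (swap_ix i))) (am j))"
    by (simp add: commut_diff_left commut_sc_mult_left)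
  also have "eqQ \<beta> \<dots> (- (sc c * (if swap_ix i = j then 0 else sc (1 - 1 / \<beta>) * am j)))"
    by (intro eqQ_uminus eqQ_mult eqQ_refl eqQ_commut_anticommut_am assms)
  also have "\<dots> = - (if i = j then am j else 0)"
    using c_inverse by (cases i; cases j) simp_all
  finally show ?thesis .
qed

lemma eqQ_commut_Nop_ap:
  assumes "\<beta> \<noteq> 0" "\<beta> \<noteq> 1"
  shows "eqQ \<beta> (commut (Nop \<beta> i) (ap j)) (if i = j then ap j else 0)"
proof -
  define c where "c = \<beta> / (\<beta> - 1)"
  define a where "a = (if i = i1 then c else 0)"
  have c_inverse: "c * (1 - 1 / \<beta>) = 1"
    using assms by (simp add: c_def field_simps)
  have "eqQ \<beta> (commut (Nop \<beta> i) (ap j))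
      (commut (sc a - sc c * anticommut (am (swap_ix i)) (ap (swap_ix i))) (ap j))"
    unfolding a_def c_def by (intro eqQ_commut eqQ_refl eqQ_Nop_anticommut assms)
  also have "\<dots> = - (sc c * commut (anticommut (am (swap_ix i)) (ap (swap_ix i))) (ap j))"
    by (simp add: commut_diff_left commut_sc_mult_left)
  also have "eqQ \<beta> \<dots> (- (sc c * (if swap_ix i = j then 0 else - (sc (1 - 1 / \<beta>) * ap j))))"
    by (intro eqQ_uminus eqQ_mult eqQ_refl eqQ_commut_anticommut_ap assms)
  also have "\<dots> = (if i = j then ap j else 0)"
    using c_inverse by (cases i; cases j) simp_all
  finally show ?thesis .
qed

lemma swap_ix_swap_ix [simp]: "swap_ix (swap_ix i) = i"
  by (cases i) auto

lemma swap_gen_swap_gen [simp]: "swap_gen (swap_gen g) = g"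
  by (cases g) auto

lemma swap_word_swap_word [simp]: "swap_word (swap_word w) = w"
  by (cases w) (simp add: comp_def)

lemma swap_word_add: "swap_word (u + v) = swap_word u + swap_word v"
  by (cases u; cases v) simp

lemma swap_word_0 [simp]: "swap_word 0 = 0"
  by (simp add: zero_word_def)

lemma lookup_fswap: "Poly_Mapping.lookup (fswap p) v = Poly_Mapping.lookup p (swap_word v)"
proof -
  have "Poly_Mapping.lookup (fswap p) v =
      (\<Sum>u\<in>Poly_Mapping.keys p. if u = swap_word v then Poly_Mapping.lookup p u else 0)"
    unfolding fswap_def lookup_sum
    by (intro sum.cong refl) (auto simp: Poly_Mapping.lookup_single when_def)
  also have "\<dots> = Poly_Mapping.lookup p (swap_word v)"
    by (simp add: in_keys_iff)
  finally show ?thesis .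
qed

lemma fswap_0 [simp]: "fswap 0 = 0"
  by (rule poly_mapping_eqI) (simp add: lookup_fswap)

lemma fswap_add: "fswap (p + q) = fswap p + fswap q"
  by (rule poly_mapping_eqI) (simp add: lookup_fswap lookup_add)

lemma fswap_diff: "fswap (p - q) = fswap p - fswap q"
  by (rule poly_mapping_eqI) (simp add: lookup_fswap lookup_minus)

lemma fswap_single: "fswap (Poly_Mapping.single u c) = Poly_Mapping.single (swap_word u) c"
  by (rule poly_mapping_eqI) (auto simp: lookup_fswap Poly_Mapping.lookup_single when_def)

lemma fswap_single_mult:
  "fswap (Poly_Mapping.single u c * q) = Poly_Mapping.single (swap_word u) c * fswap q"
proof (induction q rule: update_induct)
  case (update f k b)
  then show ?case
    by (simp add: poly_mapping_update_eq_add_single distrib_left fswap_add mult_single fswap_single swap_word_add)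
qed simp

lemma fswap_mult: "fswap (p * q) = fswap p * fswap q"
proof (induction p rule: update_induct)
  case (update f k b)
  then show ?case
    by (simp add: poly_mapping_update_eq_add_single distrib_right fswap_add fswap_single_mult fswap_single)
qed simp

lemma fswap_1 [simp]: "fswap 1 = 1"
  using fswap_single[of 0 1] by simp

lemma fswap_am [simp]: "fswap (am i) = am (swap_ix i)"
  by (simp add: am_def fswap_single)

lemma fswap_ap [simp]: "fswap (ap i) = ap (swap_ix i)"
  by (simp add: ap_def fswap_single)

lemma fswap_sc [simp]: "fswap (sc c) = sc c"
  by (simp add: sc_def fswap_single)

lemma fswap_unit_sum: "fswap (unit_sum \<beta>) = unit_sum \<beta>"
  by (simp add: unit_sum_def fswap_add fswap_mult algebra_simps)

lemma fswap_rels: "r \<in> rels \<beta> \<Longrightarrow> fswap r \<in> rels \<beta>"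
  unfolding rels_def unit_sum_def[symmetric]
  by (force simp: fswap_mult fswap_diff fswap_unit_sum)

lemma fswap_two_sided_ideal_rels:
  "x \<in> two_sided_ideal (rels \<beta>) \<Longrightarrow> fswap x \<in> two_sided_ideal (rels \<beta>)"
proof (induction rule: two_sided_ideal.induct)
  case (gen r x y)
  then show ?case
    by (simp add: fswap_mult fswap_rels two_sided_ideal.gen)
qed (simp_all add: fswap_add two_sided_ideal.intros)

theorem mainTheorem1:
  fixes \<beta> :: complex
  assumes "\<beta> \<noteq> 0" and "\<beta> \<noteq> 1"
  shows "(\<forall>i j. eqQ \<beta> (commut (Nop \<beta> i) (am j)) (- (if i = j then am j else 0))
              \<and> eqQ \<beta> (commut (Nop \<beta> i) (ap j)) (if i = j then ap j else 0))
         \<and> (\<forall>x. x \<in> two_sided_ideal (rels \<beta>) \<longrightarrow> fswap x \<in> two_sided_ideal (rels \<beta>))"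
  using eqQ_commut_Nop_am[OF assms] eqQ_commut_Nop_ap[OF assms] fswap_two_sided_ideal_rels
  by blast

end
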